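(* Let $n\ge1$ and $\mathbf{P}_A,\mathbf{P}_B,\mathbf{Q}_A,\mathbf{Q}_B\in\mathbb{R}^{n\times n}$ be symmetric positive definite. If $\mathbf{B}$ is a symmetric positive definite matrix such that $\mathcal{E}(\mathbf{B})$ tightly circumscribes $\mathcal{V}^*$, then there exists $\omega_1\in[0,1]$ such that $\mathbf{B}=\mathbf{B}_{\mathrm{SCI}}(\omega_1)$.
   Context: $\mathbf{C}_A=\mathbf{P}_A+\mathbf{Q}_A$, $\mathbf{C}_B=\mathbf{P}_B+\mathbf{Q}_B$. For $\omega\in[0,1]$, $\bar\omega=1-\omega$: $\mathbf{B}_{\mathrm{SCI}}(\omega)^{-1}=\omega(\mathbf{P}_A+\omega\mathbf{Q}_A)^{-1}+\bar\omega(\mathbf{P}_B+\bar\omega\mathbf{Q}_B)^{-1}$. $\mathcal{A}_{\mathrm{Split}}=\{\mathbf{M} : \begin{bmatrix}\mathbf{P}_A & \mathbf{M}\\ \mathbf{M}^\intercal & \mathbf{P}_B\end{bmatrix}\succeq 0\}$. $\mathbf{C}_F(\mathbf{K},\mathbf{P}_{AB})=\mathbf{K}_A\mathbf{C}_A\mathbf{K}_A^\intercal+\mathbf{K}_A\mathbf{P}_{AB}\mathbf{K}_B^\intercal+\mathbf{K}_B\mathbf{P}_{AB}^\intercal\mathbf{K}_A^\intercal+\mathbf{K}_B\mathbf{C}_B\mathbf{K}_B^\intercal$ for $\mathbf{K}=(\mathbf{K}_A,\mathbf{K}_B)$. For $\mathbf{P}_{AB}\in\mathcal{A}_{\mathrm{Split}}$: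 $\mathbf{R}=\mathbf{C}_A+\mathbf{C}_B-\mathbf{P}_{AB}-\mathbf{P}_{AB}^\intercal$, $\mathbf{K}_A^*=(\mathbf{C}_B-\mathbf{P}_{AB}^\intercal)\mathbf{R}^{-1}$, $\mathbf{C}_F^*(\mathbf{P}_{AB})=\mathbf{C}_F((\mathbf{K}_A^*,\mathbf{I}-\mathbf{K}_A^* ),\mathbf{P}_{AB})$. For symmetric positive definite $\mathbf{P}$, $\mathcal{E}(\mathbf{P})=\{\mathbf{x}:\mathbf{x}^\intercal\mathbf{P}^{-1}\mathbf{x}\le1\}$. $\mathcal{V}^*=\bigcup_{\mathbf{P}_{AB}\in\mathcal{A}_{\mathrm{Split}}}\mathcal{E}(\mathbf{C}_F^*(\mathbf{P}_{AB}))$. An ellipsoid $\mathcal{E}(\mathbf{P})$ tightly circumscribes $\mathcal{V}^*$ if $\mathcal{V}^*\subseteq\mathcal{E}(\mathbf{P})$ and for every symmetric positive definite $\mathbf{Q}$, $\mathcal{V}^*\subseteq\mathcal{E}(\mathbf{Q})\subseteq\mathcal{E}(\mathbf{P})$ implies $\mathbf{Q}=\mathbf{P}$. *)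

theory Defs
  imports "HOL-Analysis.Analysis"
begin

definition sym_mat :: "real^'n^'n \<Rightarrow> bool" where
  "sym_mat A \<longleftrightarrow> transpose A = A"

definition spd :: "real^'n^'n \<Rightarrow> bool" where
  "spd A \<longleftrightarrow> sym_mat A \<and> (\<forall>x. x \<noteq> 0 \<longrightarrow> x \<bullet> (A *v x) > 0)"

text \<open>Block matrix [[PA, M],[M^T, PB]] is positive semidefinite: its quadratic
  form at the stacked vector (x,y) is nonnegative.\<close>
definition A_split :: "real^'n^'n \<Rightarrow> real^'n^'n \<Rightarrow> (real^'n^'n) set" where
  "A_split PA PB = {M. \<forall>x y. x \<bullet> (PA *v x) + x \<bullet> (M *v y) + y \<bullet> (transpose M *v x)
                              + y \<bullet> (PB *v y) \<ge> 0}"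

definition B_SCI :: "real^'n^'n \<Rightarrow> real^'n^'n \<Rightarrow> real^'n^'n \<Rightarrow> real^'n^'n \<Rightarrow> real \<Rightarrow> real^'n^'n" where
  "B_SCI PA PB QA QB \<omega> = matrix_inv
     (\<omega> *\<^sub>R matrix_inv (PA + \<omega> *\<^sub>R QA) + (1 - \<omega>) *\<^sub>R matrix_inv (PB + (1 - \<omega>) *\<^sub>R QB))"

definition C_F :: "real^'n^'n \<Rightarrow> real^'n^'n \<Rightarrow> real^'n^'n \<Rightarrow> real^'n^'n \<Rightarrow> real^'n^'n \<Rightarrow> real^'n^'n" where
  "C_F CA CB KA KB PAB =
     KA ** CA ** transpose KA + KA ** PAB ** transpose KB
     + KB ** transpose PAB ** transpose KA + KB ** CB ** transpose KB"

definition C_F_opt :: "real^'n^'n \<Rightarrow> real^'n^'n \<Rightarrow> real^'n^'n \<Rightarrow> real^'n^'n \<Rightarrow> real^'n^'n \<Rightarrow> real^'n^'n" where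
  "C_F_opt PA PB QA QB PAB =
     (let CA = PA + QA; CB = PB + QB;
          R = CA + CB - PAB - transpose PAB;
          KA = (CB - transpose PAB) ** matrix_inv R
      in C_F CA CB KA (mat 1 - KA) PAB)"

definition ellipsoid :: "real^'n^'n \<Rightarrow> (real^'n) set" where
  "ellipsoid P = {x. x \<bullet> (matrix_inv P *v x) \<le> 1}"

definition V_star :: "real^'n^'n \<Rightarrow> real^'n^'n \<Rightarrow> real^'n^'n \<Rightarrow> real^'n^'n \<Rightarrow> (real^'n) set" where
  "V_star PA PB QA QB = (\<Union>PAB \<in> A_split PA PB. ellipsoid (C_F_opt PA PB QA QB PAB))"

definition tightly_circumscribes :: "real^'n^'n \<Rightarrow> (real^'n) set \<Rightarrow> bool" where
  "tightly_circumscribes P V \<longleftrightarrow> V \<subseteq> ellipsoid P \<and>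
     (\<forall>Q. spd Q \<longrightarrow> V \<subseteq> ellipsoid Q \<longrightarrow> ellipsoid Q \<subseteq> ellipsoid P \<longrightarrow> Q = P)"

end

theory Submission
  imports Defs
begin

(* Let S = B^-1. Since E(B) contains every ellipsoid E(C_F*(M)), S is dominated by every
   C_F*(M)^-1. For a pair of decompositions x = PA u + QA a = PB v + QB b of the same vector,
   a suitable rank-one cross term M in A_split turns this into the bound
     x' S x <= max (u' PA u) (v' PB v) + a' QA a + b' QB b.
   Both sides are quadratic in the decomposition, which ranges over a linear subspace. By
   Dines' theorem the joint range of two quadratic forms is convex, so separating it from the
   open negative quadrant (Yuan's lemma) replaces the maximum by a convex combination with
   some weight w in [0, 1]; choosing the decomposition that is optimal for w then gives
   S <= B_SCI(w)^-1. Conversely B_SCI(w)^-1 <= C_F*(M)^-1 for every M, so E(B_SCI(w))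
   circumscribes V* and lies inside E(B); tightness forces B = B_SCI(w). *)

section \<open>Quadratic functions: the theorems of Dines and Yuan\<close>

text \<open>f (x + y) - f x - f y is twice the polar bilinear form of f; the identity below
  characterises quadratic forms without naming that bilinear form.\<close>
definition quadratic_fun :: "('a::real_vector \<Rightarrow> real) \<Rightarrow> bool" where
  "quadratic_fun f \<longleftrightarrow> (\<forall>x y s t.
     f (s *\<^sub>R x + t *\<^sub>R y) = s\<^sup>2 * f x + s * t * (f (x + y) - f x - f y) + t\<^sup>2 * f y)"

lemma quadratic_funD:
  "quadratic_fun f \<Longrightarrow>
    f (s *\<^sub>R x + t *\<^sub>R y) = s\<^sup>2 * f x + s * t * (f (x + y) - f x - f y) + t\<^sup>2 * f y"
  unfolding quadratic_fun_def by blast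

lemma quadratic_fun_zero: "quadratic_fun f \<Longrightarrow> f 0 = 0"
  using quadratic_funD[of f 0 0 0 0] by simp

lemma quadratic_fun_scaleR: "quadratic_fun f \<Longrightarrow> f (s *\<^sub>R x) = s\<^sup>2 * f x"
  using quadratic_funD[of f s x 0 0] by simp

lemma quadratic_fun_sqrt_scaleR: "quadratic_fun f \<Longrightarrow> 0 \<le> c \<Longrightarrow> f (sqrt c *\<^sub>R x) = c * f x"
  by (simp add: quadratic_fun_scaleR)

lemma quadratic_fun_lincomb:
  assumes "quadratic_fun f" "quadratic_fun g"
  shows "quadratic_fun (\<lambda>x. a * f x + b * g x)"
  unfolding quadratic_fun_def
  by (simp add: quadratic_funD[OF assms(1)] quadratic_funD[OF assms(2)] algebra_simps)

lemma quadratic_fun_add: "quadratic_fun f \<Longrightarrow> quadratic_fun g \<Longrightarrow> quadratic_fun (\<lambda>x. f x + g x)"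
  using quadratic_fun_lincomb[of f g 1 1] by simp

lemma quadratic_fun_diff: "quadratic_fun f \<Longrightarrow> quadratic_fun g \<Longrightarrow> quadratic_fun (\<lambda>x. f x - g x)"
  using quadratic_fun_lincomb[of f g 1 "-1"] by simp

lemma quadratic_fun_cross_term_sign:
  assumes "quadratic_fun h"
  obtains \<sigma> :: real where "\<sigma>\<^sup>2 = 1" "0 \<le> h (x + \<sigma> *\<^sub>R y) - h x - h (\<sigma> *\<^sub>R y)"
proof (cases "0 \<le> h (x + y) - h x - h y")
  case True
  then show ?thesis using that[of 1] by simp
next
  case False
  have "h (1 *\<^sub>R x + (-1) *\<^sub>R y) = h x - (h (x + y) - h x - h y) + h y"
    using quadratic_funD[OF assms, of 1 x "-1" y] by simp
  then show ?thesis
    using that[of "-1"] False quadratic_fun_scaleR[OF assms, of "-1" y] by simp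
qed

lemma nonneg_if_perturbations_nonneg:
  fixes x y :: real
  assumes "\<And>e. 0 < e \<Longrightarrow> 0 \<le> x + e * y"
  shows "0 \<le> x"
proof (rule ccontr)
  assume "\<not> 0 \<le> x"
  define e where "e = - x / (2 * (\<bar>y\<bar> + 1))"
  have "0 < e"
    unfolding e_def using \<open>\<not> 0 \<le> x\<close> by (intro divide_pos_pos) auto
  have "e * y \<le> e * \<bar>y\<bar>"
    using \<open>0 < e\<close> by (simp add: mult_left_mono)
  also have "\<dots> < - x"
    using \<open>\<not> 0 \<le> x\<close> mult_nonpos_nonneg[of x "\<bar>y\<bar>"] by (simp add: e_def field_simps)
  finally show False
    using assms[OF \<open>0 < e\<close>] by linarith
qed

lemma parallel_eq_scaled:
  fixes p1 p2 q1 q2 a b r :: real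
  assumes "q1 * p2 = q2 * p1" and "a * p1 + b * p2 = 1" and "a * q1 + b * q2 = r"
  shows "q1 = r * p1" and "q2 = r * p2"
  using assms by algebra+

lemma quadratic_segment_meets_ray:
  assumes f: "quadratic_fun f" and g: "quadratic_fun g" and "0 \<le> u" "0 \<le> v"
  obtains \<tau> where "0 \<le> \<tau>" "\<tau> \<le> 1"
    "f ((1 - \<tau>) *\<^sub>R x + \<tau> *\<^sub>R y) * (u * g x + v * g y)
       = g ((1 - \<tau>) *\<^sub>R x + \<tau> *\<^sub>R y) * (u * f x + v * f y)"
proof -
  define d where "d = f x * g y - g x * f y"
  define D where "D \<tau> = f ((1 - \<tau>) *\<^sub>R x + \<tau> *\<^sub>R y) * (u * g x + v * g y)
                        - g ((1 - \<tau>) *\<^sub>R x + \<tau> *\<^sub>R y) * (u * f x + v * f y)" for \<tau>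
  have cont: "continuous_on {0..1} D"
    unfolding D_def quadratic_funD[OF f] quadratic_funD[OF g] by (intro continuous_intros)
  have D0: "D 0 = v * d" and D1: "D 1 = - u * d"
    by (simp_all add: D_def d_def algebra_simps)
  have "\<exists>\<tau>. 0 \<le> \<tau> \<and> \<tau> \<le> 1 \<and> D \<tau> = 0"
  proof (cases "0 \<le> d")
    case True
    show ?thesis
      by (rule IVT2'[OF _ _ _ cont]) (use True \<open>0 \<le> u\<close> \<open>0 \<le> v\<close> D0 D1 in auto)
  next
    case False
    show ?thesis
      by (rule IVT'[OF _ _ _ cont])
        (use False \<open>0 \<le> u\<close> \<open>0 \<le> v\<close> D0 D1 in \<open>auto simp: mult_nonneg_nonpos\<close>)
  qed
  then show ?thesis
    using that unfolding D_def by auto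
qed

lemma Dines_dependent:
  fixes f g :: "'a::real_vector \<Rightarrow> real"
  assumes f: "quadratic_fun f" and g: "quadratic_fun g" and V: "subspace V"
    and "x \<in> V" "y \<in> V" and dep: "f x * g y = g x * f y" and "0 \<le> u" "0 \<le> v"
  shows "\<exists>z\<in>V. f z = u * f x + v * f y \<and> g z = u * g x + v * g y"
proof (cases "f x = 0 \<and> g x = 0")
  case True
  then show ?thesis
    using \<open>y \<in> V\<close> \<open>0 \<le> v\<close> V
    by (intro bexI[of _ "sqrt v *\<^sub>R y"])
      (simp_all add: quadratic_fun_sqrt_scaleR[OF f] quadratic_fun_sqrt_scaleR[OF g] subspace_scale)
next
  case False
  obtain \<sigma> where \<sigma>: "f y = \<sigma> * f x" "g y = \<sigma> * g x"
  proof (cases "f x = 0")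
    case True
    with False dep show ?thesis
      by (intro that[of "g y / g x"]) auto
  next
    case False
    with dep show ?thesis
      by (intro that[of "f y / f x"]) (auto simp: field_simps)
  qed
  define \<pi> where "\<pi> = u + v * \<sigma>"
  show ?thesis
  proof (cases "0 \<le> \<pi>")
    case True
    then show ?thesis
      using \<open>x \<in> V\<close> V
      by (intro bexI[of _ "sqrt \<pi> *\<^sub>R x"])
        (simp_all add: quadratic_fun_sqrt_scaleR[OF f] quadratic_fun_sqrt_scaleR[OF g]
          subspace_scale \<pi>_def \<sigma> algebra_simps)
  next
    case False
    then have "\<sigma> < 0"
      using \<open>0 \<le> u\<close> \<open>0 \<le> v\<close> unfolding \<pi>_def by (metis add_nonneg_nonneg mult_nonneg_nonneg not_le)
    with False have "0 \<le> \<pi> / \<sigma>"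
      by (simp add: divide_nonpos_neg)
    then show ?thesis
      using \<open>y \<in> V\<close> V \<open>\<sigma> < 0\<close>
      by (intro bexI[of _ "sqrt (\<pi> / \<sigma>) *\<^sub>R y"])
        (simp_all add: quadratic_fun_sqrt_scaleR[OF f] quadratic_fun_sqrt_scaleR[OF g]
          subspace_scale \<pi>_def \<sigma> field_simps)
  qed
qed

lemma Dines_independent:
  fixes f g :: "'a::real_vector \<Rightarrow> real"
  assumes f: "quadratic_fun f" and g: "quadratic_fun g" and V: "subspace V"
    and "x \<in> V" "y \<in> V" and indep: "f x * g y \<noteq> g x * f y"
    and "0 \<le> u" "0 \<le> v" "u + v = 1"
  shows "\<exists>z\<in>V. f z = u * f x + v * f y \<and> g z = u * g x + v * g y"
proof -
  define p1 where "p1 = u * f x + v * f y"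
  define p2 where "p2 = u * g x + v * g y"
  define d where "d = f x * g y - g x * f y"
  define \<alpha> where "\<alpha> = (g y - g x) / d"
  define \<beta> where "\<beta> = (f x - f y) / d"
  define h where "h z = \<alpha> * f z + \<beta> * g z" for z
  have h: "quadratic_fun h"
    unfolding h_def by (rule quadratic_fun_lincomb[OF f g])
  have "d \<noteq> 0"
    using indep by (simp add: d_def)
  have "h x = ((g y - g x) * f x + (f x - f y) * g x) / d"
    by (simp add: h_def \<alpha>_def \<beta>_def add_divide_distrib)
  also have "\<dots> = 1"
    using \<open>d \<noteq> 0\<close> by (simp add: d_def algebra_simps)
  finally have hx: "h x = 1" .
  have "h y = ((g y - g x) * f y + (f x - f y) * g y) / d"
    by (simp add: h_def \<alpha>_def \<beta>_def add_divide_distrib)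
  also have "\<dots> = 1"
    using \<open>d \<noteq> 0\<close> by (simp add: d_def algebra_simps)
  finally have hy: "h y = 1" .
  have "\<alpha> * p1 + \<beta> * p2 = u * h x + v * h y"
    by (simp add: h_def p1_def p2_def algebra_simps)
  then have hp: "\<alpha> * p1 + \<beta> * p2 = 1"
    using hx hy \<open>u + v = 1\<close> by simp
  \<comment> \<open>Flipping the sign of y keeps f y and g y but may flip the cross term of h; once that
    term is nonnegative, h stays positive along the segment from x to y, so the segment meets
    the open ray through (p1, p2) rather than the opposite one.\<close>
  obtain \<sigma> :: real where "\<sigma>\<^sup>2 = 1" and cross: "0 \<le> h (x + \<sigma> *\<^sub>R y) - h x - h (\<sigma> *\<^sub>R y)"
    using quadratic_fun_cross_term_sign[OF h] by blast
  define y' where "y' = \<sigma> *\<^sub>R y"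
  have "y' \<in> V" "f y' = f y" "g y' = g y" "h y' = 1"
    using \<open>y \<in> V\<close> V \<open>\<sigma>\<^sup>2 = 1\<close> hy
    by (simp_all add: y'_def subspace_scale quadratic_fun_scaleR[OF f]
        quadratic_fun_scaleR[OF g] quadratic_fun_scaleR[OF h])
  obtain \<tau> where \<tau>: "0 \<le> \<tau>" "\<tau> \<le> 1"
    and par: "f ((1 - \<tau>) *\<^sub>R x + \<tau> *\<^sub>R y') * p2 = g ((1 - \<tau>) *\<^sub>R x + \<tau> *\<^sub>R y') * p1"
    using quadratic_segment_meets_ray[OF f g \<open>0 \<le> u\<close> \<open>0 \<le> v\<close>, of x y']
    unfolding p1_def p2_def \<open>f y' = f y\<close> \<open>g y' = g y\<close> by blast
  define z where "z = (1 - \<tau>) *\<^sub>R x + \<tau> *\<^sub>R y'"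
  have "z \<in> V"
    unfolding z_def using V \<open>x \<in> V\<close> \<open>y' \<in> V\<close> by (simp add: subspace_add subspace_scale)
  have "0 < h z"
  proof -
    have "0 < (1 - \<tau>)\<^sup>2 + \<tau>\<^sup>2"
      by (cases "\<tau> = 0") (auto simp: add_nonneg_pos)
    moreover have "0 \<le> (1 - \<tau>) * \<tau> * (h (x + y') - h x - h y')"
      using \<tau> cross by (simp add: y'_def)
    ultimately show ?thesis
      unfolding z_def quadratic_funD[OF h] hx \<open>h y' = 1\<close> by linarith
  qed
  have "f z = h z * p1" "g z = h z * p2"
    using parallel_eq_scaled[OF par[folded z_def] hp h_def[symmetric]] by auto
  then show ?thesis
    using \<open>0 < h z\<close> \<open>z \<in> V\<close> V
    by (intro bexI[of _ "sqrt (1 / h z) *\<^sub>R z"])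
      (simp_all add: quadratic_fun_sqrt_scaleR[OF f] quadratic_fun_sqrt_scaleR[OF g]
        p1_def p2_def subspace_scale)
qed

theorem Dines_convex_joint_range:
  fixes f g :: "'a::real_vector \<Rightarrow> real"
  assumes "quadratic_fun f" "quadratic_fun g" "subspace V"
  shows "convex ((\<lambda>x. (f x, g x)) ` V)"
  unfolding convex_def
proof clarsimp
  fix x y and u v :: real
  assume "x \<in> V" "y \<in> V" "0 \<le> u" "0 \<le> v" "u + v = 1"
  then have "\<exists>z\<in>V. f z = u * f x + v * f y \<and> g z = u * g x + v * g y"
    using Dines_dependent[OF assms] Dines_independent[OF assms] by blast
  then show "(u * f x + v * f y, u * g x + v * g y) \<in> (\<lambda>x. (f x, g x)) ` V"
    by (metis (no_types, lifting) image_eqI)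
qed

theorem Yuan_lemma:
  fixes f g :: "'a::real_vector \<Rightarrow> real"
  assumes f: "quadratic_fun f" and g: "quadratic_fun g" and V: "subspace V"
    and nonneg: "\<And>x. x \<in> V \<Longrightarrow> 0 \<le> max (f x) (g x)"
  obtains l where "0 \<le> l" "l \<le> 1" "\<And>x. x \<in> V \<Longrightarrow> 0 \<le> l * f x + (1 - l) * g x"
proof -
  define K where "K = (\<lambda>x. (f x, g x)) ` V"
  define P :: "(real \<times> real) set" where "P = {p. 0 < fst p \<and> 0 < snd p}"
  have "convex K"
    unfolding K_def by (rule Dines_convex_joint_range[OF f g V])
  moreover have "convex P"
  proof -
    have "P = {p. 0 < (1, 0) \<bullet> p} \<inter> {p. 0 < (0, 1) \<bullet> p}"
      by (auto simp: P_def inner_prod_def)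
    then show ?thesis
      by (simp add: convex_Int convex_halfspace_gt)
  qed
  define S where "S = (\<Union>k\<in>K. \<Union>p\<in>P. {k + p})"
  have "convex S"
    unfolding S_def by (rule convex_sums) fact+
  moreover have "0 \<notin> S"
  proof
    assume "0 \<in> S"
    then obtain x p where "x \<in> V" "p \<in> P" "(f x, g x) + p = 0"
      unfolding S_def K_def by auto
    then have "f x < 0" "g x < 0"
      by (auto simp: P_def prod_eq_iff)
    with nonneg[OF \<open>x \<in> V\<close>] show False
      by simp
  qed
  ultimately obtain a where "a \<noteq> 0" and sepS: "\<forall>s\<in>S. 0 \<le> a \<bullet> s"
    using separating_hyperplane_set_0 by blast
  have sep: "0 \<le> a \<bullet> (k + p)" if "k \<in> K" "p \<in> P" for k p
    using sepS that unfolding S_def by blast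
  obtain a1 a2 where a: "a = (a1, a2)"
    by (cases a)
  have sepV: "0 \<le> a1 * (f x + e1) + a2 * (g x + e2)" if "x \<in> V" "0 < e1" "0 < e2" for x e1 e2
    using sep[of "(f x, g x)" "(e1, e2)"] that by (simp add: K_def P_def a)
  have "0 \<le> a1"
    by (rule nonneg_if_perturbations_nonneg[of a1 a2])
      (use sepV[OF subspace_0[OF V] zero_less_one] in
        \<open>simp add: quadratic_fun_zero[OF f] quadratic_fun_zero[OF g] algebra_simps\<close>)
  moreover have "0 \<le> a2"
    by (rule nonneg_if_perturbations_nonneg[of a2 a1])
      (use sepV[OF subspace_0[OF V] _ zero_less_one] in
        \<open>simp add: quadratic_fun_zero[OF f] quadratic_fun_zero[OF g] algebra_simps\<close>)
  moreover have "a1 \<noteq> 0 \<or> a2 \<noteq> 0"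
    using \<open>a \<noteq> 0\<close> a by (auto simp: zero_prod_def)
  ultimately have "0 < a1 + a2"
    by linarith
  have "0 \<le> a1 * f x + a2 * g x" if "x \<in> V" for x
    by (rule nonneg_if_perturbations_nonneg[of _ "a1 + a2"])
      (use sepV[OF that] in \<open>simp add: algebra_simps\<close>)
  moreover define l where "l = a1 / (a1 + a2)"
  have "1 - l = a2 / (a1 + a2)"
    using \<open>0 < a1 + a2\<close> by (simp add: l_def field_simps)
  then have "l * f x + (1 - l) * g x = (a1 * f x + a2 * g x) / (a1 + a2)" for x
    by (simp add: l_def add_divide_distrib)
  ultimately have "0 \<le> l * f x + (1 - l) * g x" if "x \<in> V" for x
    using \<open>0 < a1 + a2\<close> that by simp
  moreover have "0 \<le> l" "l \<le> 1"
    using \<open>0 \<le> a1\<close> \<open>0 \<le> a2\<close> \<open>0 < a1 + a2\<close> by (auto simp: l_def)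
  ultimately show ?thesis
    using that by blast
qed

section \<open>Quadratic forms of matrices\<close>

definition quad_form :: "real^'n^'n \<Rightarrow> real^'n \<Rightarrow> real" where
  "quad_form A x = x \<bullet> (A *v x)"

lemma inner_transpose_mult: "y \<bullet> (transpose M *v x) = x \<bullet> (M *v y)"
  for M :: "real^'n^'n"
  by (simp add: dot_lmul_matrix[symmetric] inner_commute)

text \<open>Keep transpose M *v x as it is, so that inner_transpose_mult applies.\<close>
declare transpose_matrix_vector [simp del]

lemma sym_mat_inner_commute: "sym_mat A \<Longrightarrow> x \<bullet> (A *v y) = y \<bullet> (A *v x)"
  unfolding sym_mat_def using inner_transpose_mult[of y A x] by simp

lemma transpose_add: "transpose (A + B) = transpose A + transpose (B::real^'n^'n)"
  by (simp add: transpose_def vec_eq_iff)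

lemma transpose_diff: "transpose (A - B) = transpose A - transpose (B::real^'n^'n)"
  by (simp add: transpose_def vec_eq_iff)

lemma quad_form_add:
  "sym_mat A \<Longrightarrow> quad_form A (x + y) = quad_form A x + 2 * (x \<bullet> (A *v y)) + quad_form A y"
  unfolding quad_form_def
  by (simp add: algebra_simps inner_add_left inner_add_right sym_mat_inner_commute[of A y x])

lemma quad_form_diff:
  "sym_mat A \<Longrightarrow> quad_form A (x - y) = quad_form A x - 2 * (x \<bullet> (A *v y)) + quad_form A y"
  unfolding quad_form_def
  by (simp add: algebra_simps inner_diff_left inner_diff_right sym_mat_inner_commute[of A y x])

lemma quad_form_scaleR: "quad_form A (c *\<^sub>R x) = c\<^sup>2 * quad_form A x"
  unfolding quad_form_def by (simp add: matrix_vector_mult_scaleR power2_eq_square)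

lemma matrix_vector_mult_uminus [simp]: "A *v (- x) = - (A *v x)"
  for A :: "real^'n^'m"
  using matrix_vector_mult_scaleR[of A "-1" x] by simp

lemma quad_form_zero [simp]: "quad_form A 0 = 0"
  unfolding quad_form_def by simp

lemma quad_form_matrix_add: "quad_form (A + B) x = quad_form A x + quad_form B x"
  unfolding quad_form_def by (simp add: matrix_vector_mult_add_rdistrib inner_add_right)

lemma quad_form_matrix_scaleR: "quad_form (c *\<^sub>R A) x = c * quad_form A x"
  unfolding quad_form_def by (simp add: scaleR_matrix_vector_assoc[symmetric])

lemma quadratic_fun_quad_form:
  assumes "sym_mat A" and "linear h"
  shows "quadratic_fun (\<lambda>z. quad_form A (h z))"
  unfolding quadratic_fun_def
  by (simp add: linear_add[OF assms(2)] linear_scale[OF assms(2)] quad_form_add[OF assms(1)]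
      quad_form_scaleR matrix_vector_mult_scaleR algebra_simps)

lemma spd_quad_form_pos: "spd A \<Longrightarrow> x \<noteq> 0 \<Longrightarrow> 0 < quad_form A x"
  unfolding spd_def quad_form_def by blast

lemma spd_quad_form_nonneg: "spd A \<Longrightarrow> 0 \<le> quad_form A x"
  using spd_quad_form_pos[of A x] by (cases "x = 0") auto

lemma spd_quad_form_eq_0_iff: "spd A \<Longrightarrow> quad_form A x = 0 \<longleftrightarrow> x = 0"
  using spd_quad_form_pos by force

lemma spd_imp_sym_mat: "spd A \<Longrightarrow> sym_mat A"
  unfolding spd_def by blast

lemma spdI: "sym_mat A \<Longrightarrow> (\<And>x. x \<noteq> 0 \<Longrightarrow> 0 < quad_form A x) \<Longrightarrow> spd A"
  unfolding spd_def quad_form_def by blast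

lemma spd_invertible:
  fixes A :: "real^'n^'n"
  assumes "spd A"
  shows "invertible A"
proof -
  have "\<forall>x. A *v x = 0 \<longrightarrow> x = 0"
    using spd_quad_form_pos[OF assms] unfolding quad_form_def by (metis inner_zero_right less_irrefl)
  then show ?thesis
    unfolding invertible_left_inverse matrix_left_invertible_ker .
qed

lemma spd_add_scaleR:
  fixes P Q :: "real^'n^'n"
  assumes "spd P" "spd Q" "0 \<le> c"
  shows "spd (P + c *\<^sub>R Q)"
proof (rule spdI)
  show "sym_mat (P + c *\<^sub>R Q)"
    using assms unfolding spd_def sym_mat_def by (simp add: transpose_add transpose_scalar)
next
  fix x :: "real^'n"
  assume "x \<noteq> 0"
  then show "0 < quad_form (P + c *\<^sub>R Q) x"
    using spd_quad_form_pos[OF assms(1)] spd_quad_form_nonneg[OF assms(2)] assms(3)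
    by (simp add: quad_form_matrix_add quad_form_matrix_scaleR add_pos_nonneg)
qed

lemma spd_convex_comb:
  fixes X Y :: "real^'n^'n"
  assumes "spd X" "spd Y" "0 \<le> l" "l \<le> 1"
  shows "spd (l *\<^sub>R X + (1 - l) *\<^sub>R Y)"
proof (rule spdI)
  show "sym_mat (l *\<^sub>R X + (1 - l) *\<^sub>R Y)"
    using assms unfolding spd_def sym_mat_def by (simp add: transpose_add transpose_scalar)
next
  fix x :: "real^'n"
  assume "x \<noteq> 0"
  then have "0 < quad_form X x" "0 < quad_form Y x"
    using spd_quad_form_pos assms by auto
  then show "0 < quad_form (l *\<^sub>R X + (1 - l) *\<^sub>R Y) x"
    using assms(3,4) unfolding quad_form_matrix_add quad_form_matrix_scaleR
    by (cases "l = 0") (simp_all add: add_pos_nonneg)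
qed

lemma quad_form_polar_le:
  assumes "spd A"
  shows "2 * (x \<bullet> (A *v y)) \<le> quad_form A x + quad_form A y"
  using spd_quad_form_nonneg[OF assms, of "x - y"]
  unfolding quad_form_diff[OF spd_imp_sym_mat[OF assms]] by simp

lemma quad_form_Cauchy_Schwarz:
  fixes A :: "real^'n^'n"
  assumes "spd A"
  shows "(x \<bullet> (A *v y))\<^sup>2 \<le> quad_form A x * quad_form A y"
proof (cases "y = 0")
  case False
  define c where "c = x \<bullet> (A *v y)"
  have "0 < quad_form A y"
    using spd_quad_form_pos[OF assms False] .
  moreover have "0 \<le> quad_form A (quad_form A y *\<^sub>R x - c *\<^sub>R y)"
    by (rule spd_quad_form_nonneg[OF assms])
  then have "0 \<le> quad_form A y * (quad_form A y * quad_form A x - c\<^sup>2)"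
    unfolding quad_form_diff[OF spd_imp_sym_mat[OF assms]] quad_form_scaleR
    by (simp add: matrix_vector_mult_scaleR c_def power2_eq_square algebra_simps)
  ultimately show ?thesis
    by (simp add: c_def zero_le_mult_iff mult.commute)
qed simp

lemma matrix_inv_right: "invertible A \<Longrightarrow> A ** matrix_inv A = mat 1"
  for A :: "real^'n^'n"
  unfolding invertible_def matrix_inv_def by (rule someI2_ex) auto

lemma matrix_inv_left: "invertible A \<Longrightarrow> matrix_inv A ** A = mat 1"
  for A :: "real^'n^'n"
  unfolding invertible_def matrix_inv_def by (rule someI2_ex) auto

lemma matrix_inv_mult_vector: "invertible A \<Longrightarrow> A *v (matrix_inv A *v x) = x"
  for A :: "real^'n^'n"
  by (simp add: matrix_vector_mul_assoc matrix_inv_right)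

lemma matrix_inv_matrix_inv:
  fixes A :: "real^'n^'n"
  assumes "invertible A"
  shows "matrix_inv (matrix_inv A) = A"
proof -
  have "invertible (matrix_inv A)"
    using matrix_inv_left[OF assms] matrix_inv_right[OF assms] unfolding invertible_def by blast
  then have "matrix_inv (matrix_inv A) = matrix_inv (matrix_inv A) ** (matrix_inv A ** A)"
    by (simp add: matrix_inv_left[OF assms])
  also have "\<dots> = A"
    by (simp add: matrix_mul_assoc matrix_inv_left[OF \<open>invertible (matrix_inv A)\<close>])
  finally show ?thesis .
qed

lemma sym_mat_matrix_inv:
  fixes A :: "real^'n^'n"
  assumes "sym_mat A" "invertible A"
  shows "sym_mat (matrix_inv A)"
proof -
  have left: "transpose (matrix_inv A) ** A = mat 1"
    using matrix_inv_right[OF assms(2)] assms(1) unfolding sym_mat_def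
    by (metis matrix_transpose_mul transpose_mat)
  have "transpose (matrix_inv A) = transpose (matrix_inv A) ** (A ** matrix_inv A)"
    by (simp add: matrix_inv_right[OF assms(2)])
  also have "\<dots> = matrix_inv A"
    by (simp add: matrix_mul_assoc left)
  finally show ?thesis
    unfolding sym_mat_def .
qed

lemma quad_form_matrix_inv:
  "invertible A \<Longrightarrow> quad_form (matrix_inv A) x = quad_form A (matrix_inv A *v x)"
  unfolding quad_form_def by (simp add: matrix_inv_mult_vector inner_commute)

lemma spd_matrix_inv:
  fixes A :: "real^'n^'n"
  assumes "spd A"
  shows "spd (matrix_inv A)"
proof (rule spdI)
  have "invertible A"
    using spd_invertible[OF assms] .
  then show "sym_mat (matrix_inv A)"
    using sym_mat_matrix_inv spd_imp_sym_mat[OF assms] by blast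
  fix x :: "real^'n"
  assume "x \<noteq> 0"
  then have "matrix_inv A *v x \<noteq> 0"
    using matrix_inv_mult_vector[OF \<open>invertible A\<close>, of x] by auto
  then show "0 < quad_form (matrix_inv A) x"
    unfolding quad_form_matrix_inv[OF \<open>invertible A\<close>] by (rule spd_quad_form_pos[OF assms])
qed

lemma le_quad_form_matrix_inv:
  fixes C :: "real^'n^'n"
  assumes "spd C"
  shows "2 * (y \<bullet> x) - quad_form C y \<le> quad_form (matrix_inv C) x"
proof -
  have "invertible C"
    by (rule spd_invertible[OF assms])
  have "2 * (y \<bullet> x) = 2 * (y \<bullet> (C *v (matrix_inv C *v x)))"
    by (simp add: matrix_inv_mult_vector[OF \<open>invertible C\<close>])
  also have "\<dots> \<le> quad_form C y + quad_form C (matrix_inv C *v x)"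
    by (rule quad_form_polar_le[OF assms])
  finally show ?thesis
    unfolding quad_form_matrix_inv[OF \<open>invertible C\<close>] by simp
qed

lemma quad_form_matrix_inv_le:
  fixes C :: "real^'n^'n"
  assumes "invertible C" and "\<And>y. 2 * (y \<bullet> x) - quad_form C y \<le> r"
  shows "quad_form (matrix_inv C) x \<le> r"
  using assms(2)[of "matrix_inv C *v x"]
  unfolding quad_form_matrix_inv[OF assms(1)] by (simp add: quad_form_def matrix_inv_mult_vector[OF assms(1)] inner_commute)

lemma mem_ellipsoid_iff: "x \<in> ellipsoid P \<longleftrightarrow> quad_form (matrix_inv P) x \<le> 1"
  by (simp add: ellipsoid_def quad_form_def)

lemma ellipsoid_subset_iff:
  fixes P Q :: "real^'n^'n"
  assumes "spd P"
  shows "ellipsoid P \<subseteq> ellipsoid Q \<longleftrightarrow>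
    (\<forall>x. quad_form (matrix_inv Q) x \<le> quad_form (matrix_inv P) x)"
proof
  assume sub: "ellipsoid P \<subseteq> ellipsoid Q"
  show "\<forall>x. quad_form (matrix_inv Q) x \<le> quad_form (matrix_inv P) x"
  proof
    fix x :: "real^'n"
    show "quad_form (matrix_inv Q) x \<le> quad_form (matrix_inv P) x"
    proof (cases "x = 0")
      case False
      define r where "r = quad_form (matrix_inv P) x"
      have "0 < r"
        unfolding r_def by (rule spd_quad_form_pos[OF spd_matrix_inv[OF assms] False])
      then have "sqrt (1 / r) *\<^sub>R x \<in> ellipsoid P"
        by (simp add: mem_ellipsoid_iff quad_form_scaleR r_def)
      then have "quad_form (matrix_inv Q) (sqrt (1 / r) *\<^sub>R x) \<le> 1"
        using sub by (auto simp: mem_ellipsoid_iff)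
      with \<open>0 < r\<close> show ?thesis
        by (simp add: quad_form_scaleR r_def)
    qed simp
  qed
qed (meson mem_ellipsoid_iff order_trans subsetI)

section \<open>The optimal fused covariance\<close>

definition block_form ::
    "real^'n^'n \<Rightarrow> real^'n^'n \<Rightarrow> real^'n^'n \<Rightarrow> real^'n \<Rightarrow> real^'n \<Rightarrow> real" where
  "block_form PA PB M x y = quad_form PA x + 2 * (x \<bullet> (M *v y)) + quad_form PB y"

lemma A_split_iff_block_form: "M \<in> A_split PA PB \<longleftrightarrow> (\<forall>x y. 0 \<le> block_form PA PB M x y)"
  by (simp add: A_split_def block_form_def quad_form_def inner_transpose_mult algebra_simps)

lemma block_form_matrix_add:
  "block_form (PA + QA) (PB + QB) M x y = block_form PA PB M x y + quad_form QA x + quad_form QB y"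
  by (simp add: block_form_def quad_form_matrix_add)

lemma quad_form_C_F:
  fixes CA CB KA KB M :: "real^'n^'n"
  shows "quad_form (C_F CA CB KA KB M) y
           = block_form CA CB M (transpose KA *v y) (transpose KB *v y)"
proof -
  have triple: "y \<bullet> ((X ** Y ** transpose Z) *v y) = (transpose X *v y) \<bullet> (Y *v (transpose Z *v y))"
    for X Y Z :: "real^'n^'n"
    using inner_transpose_mult[of "Y *v (transpose Z *v y)" X y]
    by (simp add: matrix_vector_mul_assoc[symmetric] matrix_mul_assoc[symmetric] inner_commute)
  show ?thesis
    unfolding C_F_def block_form_def quad_form_def
    by (simp add: matrix_vector_mult_add_rdistrib inner_add_right triple inner_transpose_mult)
qed

lemma sym_mat_C_F:
  assumes "sym_mat CA" "sym_mat CB"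
  shows "sym_mat (C_F CA CB KA KB M)"
  using assms unfolding C_F_def sym_mat_def
  by (simp add: transpose_add matrix_transpose_mul matrix_mul_assoc algebra_simps)

lemma spd_gain_denominator:
  fixes PA PB QA QB M :: "real^'n^'n"
  assumes spd: "spd PA" "spd PB" "spd QA" "spd QB" and M: "M \<in> A_split PA PB"
  shows "spd (PA + QA + (PB + QB) - M - transpose M)"
proof (rule spdI)
  show "sym_mat (PA + QA + (PB + QB) - M - transpose M)"
    using spd unfolding spd_def sym_mat_def by (simp add: transpose_add transpose_diff algebra_simps)
next
  fix v :: "real^'n"
  assume "v \<noteq> 0"
  have "quad_form (PA + QA + (PB + QB) - M - transpose M) v
          = block_form PA PB M v (- v) + quad_form QA v + quad_form QB v"
    by (simp add: block_form_def quad_form_def matrix_vector_mult_add_rdistrib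
        matrix_vector_mult_diff_rdistrib inner_add_right inner_diff_right inner_transpose_mult)
  moreover have "0 \<le> block_form PA PB M v (- v)"
    using M by (simp add: A_split_iff_block_form)
  moreover have "0 < quad_form QA v" "0 < quad_form QB v"
    using spd_quad_form_pos spd \<open>v \<noteq> 0\<close> by auto
  ultimately show "0 < quad_form (PA + QA + (PB + QB) - M - transpose M) v"
    by linarith
qed

lemma block_form_complete_square:
  fixes CA CB M :: "real^'n^'n"
  assumes "sym_mat CB"
  shows "block_form CA CB M a (y - a)
           = quad_form (CA + CB - M - transpose M) a - 2 * (a \<bullet> ((CB - M) *v y)) + quad_form CB y"
  unfolding block_form_def quad_form_diff[OF assms]
  by (simp add: quad_form_def matrix_vector_mult_add_rdistrib matrix_vector_mult_diff_rdistrib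
      matrix_vector_mult_diff_distrib inner_add_right inner_diff_right inner_transpose_mult
      sym_mat_inner_commute[OF assms, of y a])

lemma quad_form_minimizer:
  assumes "spd R" and "R *v a0 = w"
  shows "quad_form R a0 - 2 * (a0 \<bullet> w) \<le> quad_form R a - 2 * (a \<bullet> w)"
  using spd_quad_form_nonneg[OF assms(1), of "a - a0"]
  unfolding quad_form_diff[OF spd_imp_sym_mat[OF assms(1)]]
  by (simp add: assms(2) quad_form_def)

text \<open>The gain K_A* minimises the fused covariance: writing a for K_A^T y, the quadratic form of
  C_F((K_A, I - K_A), M) at y is the block form at (a, y - a).\<close>
lemma C_F_opt_minimal:
  fixes PA PB QA QB M :: "real^'n^'n"
  assumes spd: "spd PA" "spd PB" "spd QA" "spd QB" and M: "M \<in> A_split PA PB"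
  shows "\<exists>a. quad_form (C_F_opt PA PB QA QB M) y = block_form (PA + QA) (PB + QB) M a (y - a)"
    and "quad_form (C_F_opt PA PB QA QB M) y \<le> block_form (PA + QA) (PB + QB) M a (y - a)"
proof -
  define R where "R = PA + QA + (PB + QB) - M - transpose M"
  define KA where "KA = (PB + QB - transpose M) ** matrix_inv R"
  define a0 where "a0 = matrix_inv R *v ((PB + QB - M) *v y)"
  have "spd R"
    unfolding R_def by (rule spd_gain_denominator[OF spd M])
  have "sym_mat (PB + QB)"
    using spd unfolding spd_def sym_mat_def by (simp add: transpose_add)
  have "transpose (matrix_inv R) = matrix_inv R"
    using sym_mat_matrix_inv[OF spd_imp_sym_mat spd_invertible, OF \<open>spd R\<close> \<open>spd R\<close>]
    unfolding sym_mat_def .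
  then have "transpose KA *v y = a0"
    using \<open>sym_mat (PB + QB)\<close> unfolding KA_def a0_def sym_mat_def
    by (simp add: matrix_transpose_mul transpose_diff matrix_vector_mul_assoc)
  then have C_y: "quad_form (C_F_opt PA PB QA QB M) y = block_form (PA + QA) (PB + QB) M a0 (y - a0)"
    unfolding C_F_opt_def Let_def R_def[symmetric] KA_def[symmetric] quad_form_C_F
    by (simp add: transpose_diff matrix_vector_mult_diff_rdistrib)
  then show "\<exists>a. quad_form (C_F_opt PA PB QA QB M) y = block_form (PA + QA) (PB + QB) M a (y - a)"
    by blast
  have "R *v a0 = (PB + QB - M) *v y"
    unfolding a0_def by (rule matrix_inv_mult_vector[OF spd_invertible[OF \<open>spd R\<close>]])
  then show "quad_form (C_F_opt PA PB QA QB M) y \<le> block_form (PA + QA) (PB + QB) M a (y - a)"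
    using quad_form_minimizer[OF \<open>spd R\<close>, of a0 _ a]
    unfolding C_y block_form_complete_square[OF \<open>sym_mat (PB + QB)\<close>] R_def by simp
qed

lemma spd_C_F_opt:
  fixes PA PB QA QB M :: "real^'n^'n"
  assumes spd: "spd PA" "spd PB" "spd QA" "spd QB" and M: "M \<in> A_split PA PB"
  shows "spd (C_F_opt PA PB QA QB M)"
proof (rule spdI)
  show "sym_mat (C_F_opt PA PB QA QB M)"
    using spd unfolding C_F_opt_def Let_def spd_def
    by (intro sym_mat_C_F) (simp_all add: sym_mat_def transpose_add)
next
  fix y :: "real^'n"
  assume "y \<noteq> 0"
  obtain a where "quad_form (C_F_opt PA PB QA QB M) y = block_form (PA + QA) (PB + QB) M a (y - a)"
    using C_F_opt_minimal(1)[OF spd M] by blast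
  also have "\<dots> \<ge> quad_form QA a + quad_form QB (y - a)"
    using M by (simp add: block_form_matrix_add A_split_iff_block_form)
  moreover have "0 < quad_form QA a + quad_form QB (y - a)"
  proof (cases "a = 0")
    case True
    then show ?thesis
      using spd_quad_form_pos[OF spd(4) \<open>y \<noteq> 0\<close>] by simp
  next
    case False
    then show ?thesis
      using spd_quad_form_pos[OF spd(3) False] spd_quad_form_nonneg[OF spd(4)]
      by (simp add: add_pos_nonneg)
  qed
  ultimately show "0 < quad_form (C_F_opt PA PB QA QB M) y"
    by linarith
qed

section \<open>Split covariance intersection\<close>

definition SCI_inv :: "real^'n^'n \<Rightarrow> real^'n^'n \<Rightarrow> real^'n^'n \<Rightarrow> real^'n^'n \<Rightarrow> real \<Rightarrow> real^'n^'n" where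
  "SCI_inv PA PB QA QB \<omega> =
     \<omega> *\<^sub>R matrix_inv (PA + \<omega> *\<^sub>R QA) + (1 - \<omega>) *\<^sub>R matrix_inv (PB + (1 - \<omega>) *\<^sub>R QB)"

lemma B_SCI_eq: "B_SCI PA PB QA QB \<omega> = matrix_inv (SCI_inv PA PB QA QB \<omega>)"
  by (simp add: B_SCI_def SCI_inv_def)

lemma
  fixes PA PB QA QB :: "real^'n^'n" and x :: "real^'n"
  assumes spd: "spd PA" "spd PB" "spd QA" "spd QB" and "0 \<le> \<omega>" "\<omega> \<le> 1"
  defines "a \<equiv> matrix_inv (PA + \<omega> *\<^sub>R QA) *v x" and "b \<equiv> matrix_inv (PB + (1 - \<omega>) *\<^sub>R QB) *v x"
  shows SCI_inv_mult_vector: "SCI_inv PA PB QA QB \<omega> *v x = \<omega> *\<^sub>R a + (1 - \<omega>) *\<^sub>R b"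
    and quad_form_SCI_inv: "quad_form (SCI_inv PA PB QA QB \<omega>) x
           = \<omega> * (quad_form PA a + \<omega> * quad_form QA a)
             + (1 - \<omega>) * (quad_form PB b + (1 - \<omega>) * quad_form QB b)"
proof -
  show "SCI_inv PA PB QA QB \<omega> *v x = \<omega> *\<^sub>R a + (1 - \<omega>) *\<^sub>R b"
    by (simp add: SCI_inv_def a_def b_def matrix_vector_mult_add_rdistrib scaleR_matrix_vector_assoc)
  have "invertible (PA + \<omega> *\<^sub>R QA)" "invertible (PB + (1 - \<omega>) *\<^sub>R QB)"
    using spd \<open>0 \<le> \<omega>\<close> \<open>\<omega> \<le> 1\<close> by (simp_all add: spd_invertible spd_add_scaleR)
  then show "quad_form (SCI_inv PA PB QA QB \<omega>) x
      = \<omega> * (quad_form PA a + \<omega> * quad_form QA a) + (1 - \<omega>) * (quad_form PB b + (1 - \<omega>) * quad_form QB b)"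
    by (simp add: SCI_inv_def a_def b_def quad_form_matrix_add quad_form_matrix_scaleR quad_form_matrix_inv)
qed

lemma spd_SCI_inv:
  assumes "spd PA" "spd PB" "spd QA" "spd QB" "0 \<le> \<omega>" "\<omega> \<le> 1"
  shows "spd (SCI_inv PA PB QA QB \<omega>)"
  unfolding SCI_inv_def using assms
  by (intro spd_convex_comb spd_matrix_inv spd_add_scaleR) auto

lemma quad_form_SCI_inv_le_C_F_opt_inv:
  fixes PA PB QA QB M :: "real^'n^'n"
  assumes spd: "spd PA" "spd PB" "spd QA" "spd QB" and M: "M \<in> A_split PA PB"
    and \<omega>: "0 \<le> \<omega>" "\<omega> \<le> 1"
  shows "quad_form (SCI_inv PA PB QA QB \<omega>) x \<le> quad_form (matrix_inv (C_F_opt PA PB QA QB M)) x"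
proof -
  define G where "G = SCI_inv PA PB QA QB \<omega>"
  define C where "C = C_F_opt PA PB QA QB M"
  define a where "a = matrix_inv (PA + \<omega> *\<^sub>R QA) *v x"
  define b where "b = matrix_inv (PB + (1 - \<omega>) *\<^sub>R QB) *v x"
  have "G *v x - \<omega> *\<^sub>R a = (1 - \<omega>) *\<^sub>R b"
    unfolding G_def a_def b_def SCI_inv_mult_vector[OF spd \<omega>] by simp
  then have "quad_form C (G *v x) \<le> block_form (PA + QA) (PB + QB) M (\<omega> *\<^sub>R a) ((1 - \<omega>) *\<^sub>R b)"
    unfolding C_def using C_F_opt_minimal(2)[OF spd M, of "G *v x" "\<omega> *\<^sub>R a"] by simp
  also have "\<dots> = \<omega>\<^sup>2 * (quad_form PA a + quad_form QA a) + 2 * (\<omega> * (1 - \<omega>)) * (a \<bullet> (M *v b))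
                   + (1 - \<omega>)\<^sup>2 * (quad_form PB b + quad_form QB b)"
    unfolding block_form_def quad_form_matrix_add quad_form_scaleR matrix_vector_mult_scaleR
      inner_scaleR_left inner_scaleR_right
    by (simp add: algebra_simps power2_eq_square)
  also have "\<dots> \<le> \<omega> * (quad_form PA a + \<omega> * quad_form QA a)
                   + (1 - \<omega>) * (quad_form PB b + (1 - \<omega>) * quad_form QB b)"
  proof -
    have "0 \<le> \<omega> * (1 - \<omega>) * block_form PA PB M a (- b)"
      using M \<omega> by (simp add: A_split_iff_block_form)
    then show ?thesis
      by (simp add: block_form_def quad_form_def algebra_simps power2_eq_square)
  qed
  also have "\<dots> = quad_form G x"
    unfolding G_def a_def b_def quad_form_SCI_inv[OF spd \<omega>] ..
  finally have "quad_form C (G *v x) \<le> quad_form G x" .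
  moreover have "2 * ((G *v x) \<bullet> x) - quad_form C (G *v x) \<le> quad_form (matrix_inv C) x"
    unfolding C_def by (rule le_quad_form_matrix_inv[OF spd_C_F_opt[OF spd M]])
  ultimately show ?thesis
    unfolding G_def C_def by (simp add: quad_form_def inner_commute)
qed

lemma quad_form_le_SCI_inv:
  fixes PA PB QA QB S :: "real^'n^'n"
  assumes spd: "spd PA" "spd PB" "spd QA" "spd QB" and \<omega>: "0 \<le> \<omega>" "\<omega> \<le> 1"
    and bound: "\<And>u a v b. PA *v u + QA *v a = PB *v v + QB *v b \<Longrightarrow>
      quad_form S (PA *v u + QA *v a)
        \<le> \<omega> * quad_form PA u + (1 - \<omega>) * quad_form PB v + quad_form QA a + quad_form QB b"
  shows "quad_form S x \<le> quad_form (SCI_inv PA PB QA QB \<omega>) x"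
proof -
  define a where "a = matrix_inv (PA + \<omega> *\<^sub>R QA) *v x"
  define b where "b = matrix_inv (PB + (1 - \<omega>) *\<^sub>R QB) *v x"
  have "(PA + \<omega> *\<^sub>R QA) *v a = x" "(PB + (1 - \<omega>) *\<^sub>R QB) *v b = x"
    unfolding a_def b_def using spd \<omega>
    by (simp_all add: matrix_inv_mult_vector spd_invertible spd_add_scaleR)
  then have xA: "PA *v a + QA *v (\<omega> *\<^sub>R a) = x" and xB: "PB *v b + QB *v ((1 - \<omega>) *\<^sub>R b) = x"
    by (simp_all add: matrix_vector_mult_add_rdistrib matrix_vector_mult_scaleR
        scaleR_matrix_vector_assoc[symmetric])
  have "quad_form S x \<le> \<omega> * quad_form PA a + (1 - \<omega>) * quad_form PB b
                         + quad_form QA (\<omega> *\<^sub>R a) + quad_form QB ((1 - \<omega>) *\<^sub>R b)"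
    using bound[of a "\<omega> *\<^sub>R a" b "(1 - \<omega>) *\<^sub>R b"] xA xB by simp
  also have "\<dots> = quad_form (SCI_inv PA PB QA QB \<omega>) x"
    unfolding quad_form_SCI_inv[OF spd \<omega>] a_def[symmetric] b_def[symmetric] quad_form_scaleR
    by (simp add: algebra_simps power2_eq_square)
  finally show ?thesis .
qed

lemma
  assumes "spd PA" "spd PB" "spd QA" "spd QB" "0 \<le> \<omega>" "\<omega> \<le> 1"
  shows spd_B_SCI: "spd (B_SCI PA PB QA QB \<omega>)"
    and matrix_inv_B_SCI: "matrix_inv (B_SCI PA PB QA QB \<omega>) = SCI_inv PA PB QA QB \<omega>"
  using spd_SCI_inv[OF assms]
  by (simp_all add: B_SCI_eq spd_matrix_inv matrix_inv_matrix_inv spd_invertible)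

lemma V_star_subset_ellipsoid_iff:
  fixes PA PB QA QB P :: "real^'n^'n"
  assumes "spd PA" "spd PB" "spd QA" "spd QB"
  shows "V_star PA PB QA QB \<subseteq> ellipsoid P \<longleftrightarrow>
    (\<forall>M\<in>A_split PA PB. \<forall>x. quad_form (matrix_inv P) x \<le> quad_form (matrix_inv (C_F_opt PA PB QA QB M)) x)"
  unfolding V_star_def using ellipsoid_subset_iff[OF spd_C_F_opt[OF assms]] by blast

lemma V_star_subset_ellipsoid_B_SCI:
  assumes spd: "spd PA" "spd PB" "spd QA" "spd QB" and \<omega>: "0 \<le> \<omega>" "\<omega> \<le> 1"
  shows "V_star PA PB QA QB \<subseteq> ellipsoid (B_SCI PA PB QA QB \<omega>)"
  unfolding V_star_subset_ellipsoid_iff[OF spd] matrix_inv_B_SCI[OF spd \<omega>]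
  using quad_form_SCI_inv_le_C_F_opt_inv[OF spd _ \<omega>] by blast

section \<open>Circumscribing ellipsoids are split covariance intersections\<close>

lemma rank_one_mult_vector:
  "(\<chi> i j. a $ i * b $ j / s) *v y = ((b \<bullet> y) / s) *\<^sub>R (a :: real^'n)"
  for b y :: "real^'m"
  by (simp add: vec_eq_iff matrix_vector_mult_def inner_vec_def sum_divide_distrib sum_distrib_left
      algebra_simps)

lemma rank_one_mem_A_split:
  fixes PA PB :: "real^'n^'n"
  assumes "spd PA" "spd PB" and "0 < s" "quad_form PA u \<le> s" "quad_form PB v \<le> s"
  shows "(\<chi> i j. (PA *v u) $ i * (PB *v v) $ j / s) \<in> A_split PA PB"
  unfolding A_split_iff_block_form
proof (intro allI)
  fix x y :: "real^'n"
  define c1 where "c1 = x \<bullet> (PA *v u)"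
  define c2 where "c2 = y \<bullet> (PB *v v)"
  have "c1\<^sup>2 \<le> quad_form PA x * quad_form PA u"
    unfolding c1_def by (rule quad_form_Cauchy_Schwarz[OF assms(1)])
  also have "\<dots> \<le> quad_form PA x * s"
    using assms(4) spd_quad_form_nonneg[OF assms(1)] by (simp add: mult_left_mono)
  finally have c1: "c1\<^sup>2 \<le> s * quad_form PA x"
    by (simp add: mult.commute)
  have "c2\<^sup>2 \<le> quad_form PB y * quad_form PB v"
    unfolding c2_def by (rule quad_form_Cauchy_Schwarz[OF assms(2)])
  also have "\<dots> \<le> quad_form PB y * s"
    using assms(5) spd_quad_form_nonneg[OF assms(2)] by (simp add: mult_left_mono)
  finally have c2: "c2\<^sup>2 \<le> s * quad_form PB y"
    by (simp add: mult.commute)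
  have "s * block_form PA PB (\<chi> i j. (PA *v u) $ i * (PB *v v) $ j / s) x y
          = s * quad_form PA x + 2 * (c1 * c2) + s * quad_form PB y"
    using \<open>0 < s\<close> by (simp add: block_form_def rank_one_mult_vector c1_def c2_def inner_commute
        algebra_simps)
  also have "\<dots> \<ge> (c1 + c2)\<^sup>2"
    using c1 c2 by (simp add: power2_sum)
  finally have "0 \<le> s * block_form PA PB (\<chi> i j. (PA *v u) $ i * (PB *v v) $ j / s) x y"
    by (rule order_trans[OF zero_le_power2])
  then show "0 \<le> block_form PA PB (\<chi> i j. (PA *v u) $ i * (PB *v v) $ j / s) x y"
    using \<open>0 < s\<close> by (simp add: zero_le_mult_iff)
qed

text \<open>The rank-one M below makes the block matrix map (0, v) (if the maximum is
  quad_form PB v) or (u, 0) (otherwise) to (PA u, PB v); the left-hand side is then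
  maximised there, with value the maximum.\<close>
lemma exists_A_split_block_form_bound:
  fixes PA PB :: "real^'n^'n"
  assumes "spd PA" "spd PB"
  obtains M where "M \<in> A_split PA PB"
    "\<And>\<alpha> \<beta>. 2 * (\<alpha> \<bullet> (PA *v u) + \<beta> \<bullet> (PB *v v)) - block_form PA PB M \<alpha> \<beta>
              \<le> max (quad_form PA u) (quad_form PB v)"
proof (cases "max (quad_form PA u) (quad_form PB v) = 0")
  case True
  then have "quad_form PA u = 0" "quad_form PB v = 0"
    using spd_quad_form_nonneg[OF assms(1), of u] spd_quad_form_nonneg[OF assms(2), of v]
    by (auto simp: max_def split: if_splits)
  then have "u = 0" "v = 0"
    using assms by (simp_all add: spd_quad_form_eq_0_iff)
  have "0 \<le> block_form PA PB 0 \<alpha> \<beta>" for \<alpha> \<beta>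
    using assms by (simp add: block_form_def spd_quad_form_nonneg)
  then show ?thesis
    using that[of 0] True \<open>u = 0\<close> \<open>v = 0\<close> by (simp add: A_split_iff_block_form)
next
  case False
  define p where "p = quad_form PA u"
  define t where "t = quad_form PB v"
  define s where "s = max p t"
  define M where "M = (\<chi> i j. (PA *v u) $ i * (PB *v v) $ j / s)"
  have "0 \<le> s"
    unfolding s_def p_def using spd_quad_form_nonneg[OF assms(1), of u] by (simp add: le_max_iff_disj)
  with False have "0 < s"
    by (simp add: s_def p_def t_def)
  have M: "M \<in> A_split PA PB"
    unfolding M_def using assms \<open>0 < s\<close> by (rule rank_one_mem_A_split) (simp_all add: s_def p_def t_def)
  then have nonneg: "0 \<le> block_form PA PB M x y" for x y
    by (simp add: A_split_iff_block_form)
  have "2 * (\<alpha> \<bullet> (PA *v u) + \<beta> \<bullet> (PB *v v)) - block_form PA PB M \<alpha> \<beta> \<le> s" for \<alpha> \<beta>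
  proof (cases "p \<le> t")
    case True
    then have "M *v v = PA *v u"
      using \<open>0 < s\<close> by (simp add: M_def rank_one_mult_vector s_def t_def quad_form_def inner_commute)
    then have "block_form PA PB M \<alpha> (\<beta> - v)
                 = block_form PA PB M \<alpha> \<beta> - 2 * (\<alpha> \<bullet> (PA *v u) + \<beta> \<bullet> (PB *v v)) + t"
      using spd_imp_sym_mat[OF assms(2)]
      by (simp add: block_form_def quad_form_diff matrix_vector_mult_diff_distrib inner_diff_right t_def)
    then show ?thesis
      using nonneg[of \<alpha> "\<beta> - v"] True by (simp add: s_def)
  next
    case False
    then have "u \<bullet> (M *v \<beta>) = \<beta> \<bullet> (PB *v v)"
      using \<open>0 < s\<close> by (simp add: M_def rank_one_mult_vector s_def p_def quad_form_def inner_commute)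
    then have "block_form PA PB M (\<alpha> - u) \<beta>
                 = block_form PA PB M \<alpha> \<beta> - 2 * (\<alpha> \<bullet> (PA *v u) + \<beta> \<bullet> (PB *v v)) + p"
      using spd_imp_sym_mat[OF assms(1)]
      by (simp add: block_form_def quad_form_diff inner_diff_left p_def)
    then show ?thesis
      using nonneg[of "\<alpha> - u" \<beta>] False by (simp add: s_def)
  qed
  then show ?thesis
    using that[OF M] by (simp add: s_def p_def t_def)
qed

lemma V_star_subset_ellipsoid_imp_split_bound:
  fixes PA PB QA QB B :: "real^'n^'n"
  assumes spd: "spd PA" "spd PB" "spd QA" "spd QB"
    and sub: "V_star PA PB QA QB \<subseteq> ellipsoid B"
    and xA: "x = PA *v u + QA *v a" and xB: "x = PB *v v + QB *v b"
  shows "quad_form (matrix_inv B) x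
           \<le> max (quad_form PA u) (quad_form PB v) + quad_form QA a + quad_form QB b"
proof -
  obtain M where M: "M \<in> A_split PA PB" and bound:
    "\<And>\<alpha> \<beta>. 2 * (\<alpha> \<bullet> (PA *v u) + \<beta> \<bullet> (PB *v v)) - block_form PA PB M \<alpha> \<beta>
              \<le> max (quad_form PA u) (quad_form PB v)"
    using exists_A_split_block_form_bound[OF spd(1,2)] by blast
  define C where "C = C_F_opt PA PB QA QB M"
  have "quad_form (matrix_inv B) x \<le> quad_form (matrix_inv C) x"
    using sub M unfolding V_star_subset_ellipsoid_iff[OF spd] C_def by blast
  also have "\<dots> \<le> max (quad_form PA u) (quad_form PB v) + quad_form QA a + quad_form QB b"
  proof (rule quad_form_matrix_inv_le)
    show "invertible C"
      unfolding C_def by (rule spd_invertible[OF spd_C_F_opt[OF spd M]])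
  next
    fix y
    obtain \<alpha> where C_y: "quad_form C y = block_form (PA + QA) (PB + QB) M \<alpha> (y - \<alpha>)"
      unfolding C_def using C_F_opt_minimal(1)[OF spd M] by blast
    define \<beta> where "\<beta> = y - \<alpha>"
    have "y \<bullet> x = \<alpha> \<bullet> (PA *v u + QA *v a) + \<beta> \<bullet> (PB *v v + QB *v b)"
      using xA xB by (simp add: \<beta>_def inner_diff_left)
    moreover have "2 * (\<alpha> \<bullet> (QA *v a)) \<le> quad_form QA \<alpha> + quad_form QA a"
      by (rule quad_form_polar_le[OF spd(3)])
    moreover have "2 * (\<beta> \<bullet> (QB *v b)) \<le> quad_form QB \<beta> + quad_form QB b"
      by (rule quad_form_polar_le[OF spd(4)])
    moreover note bound[of \<alpha> \<beta>]
    ultimately show "2 * (y \<bullet> x) - quad_form C y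
                       \<le> max (quad_form PA u) (quad_form PB v) + quad_form QA a + quad_form QB b"
      unfolding C_y block_form_matrix_add \<beta>_def[symmetric] by (simp add: inner_add_right)
  qed
  finally show ?thesis .
qed

lemma exists_SCI_weight:
  fixes PA PB QA QB S :: "real^'n^'n"
  assumes spd: "spd PA" "spd PB" "spd QA" "spd QB" and "sym_mat S"
    and bound: "\<And>x u a v b. x = PA *v u + QA *v a \<Longrightarrow> x = PB *v v + QB *v b \<Longrightarrow>
      quad_form S x \<le> max (quad_form PA u) (quad_form PB v) + quad_form QA a + quad_form QB b"
  obtains \<omega> where "0 \<le> \<omega>" "\<omega> \<le> 1" "\<And>x. quad_form S x \<le> quad_form (SCI_inv PA PB QA QB \<omega>) x"
proof -
  \<comment> \<open>V consists of the ((u, a), (v, b)) with PA u + QA a = PB v + QB b.\<close>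
  define V :: "(((real^'n) \<times> (real^'n)) \<times> ((real^'n) \<times> (real^'n))) set" where
    "V = {z. PA *v fst (fst z) + QA *v snd (fst z) - (PB *v fst (snd z) + QB *v snd (snd z)) = 0}"
  define f where "f z = quad_form PA (fst (fst z)) + quad_form QA (snd (fst z))
    + quad_form QB (snd (snd z)) - quad_form S (PA *v fst (fst z) + QA *v snd (fst z))"
    for z :: "((real^'n) \<times> (real^'n)) \<times> ((real^'n) \<times> (real^'n))"
  define g where "g z = quad_form PB (fst (snd z)) + quad_form QA (snd (fst z))
    + quad_form QB (snd (snd z)) - quad_form S (PA *v fst (fst z) + QA *v snd (fst z))"
    for z :: "((real^'n) \<times> (real^'n)) \<times> ((real^'n) \<times> (real^'n))"
  have "subspace V"
    unfolding V_def
    by (rule linear_subspace_kernel, rule linearI)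
      (auto simp: matrix_vector_right_distrib matrix_vector_mult_scaleR algebra_simps)
  have sym: "sym_mat PA" "sym_mat PB" "sym_mat QA" "sym_mat QB"
    using spd spd_imp_sym_mat by auto
  have "quadratic_fun f" "quadratic_fun g"
    unfolding f_def g_def using sym \<open>sym_mat S\<close>
    by (auto intro!: quadratic_fun_diff quadratic_fun_add quadratic_fun_quad_form linearI
        simp: matrix_vector_right_distrib matrix_vector_mult_scaleR scaleR_add_right)
  moreover have "0 \<le> max (f z) (g z)" if "z \<in> V" for z
    using that bound[OF refl, of "fst (fst z)" "snd (fst z)" "fst (snd z)" "snd (snd z)"]
    by (auto simp: V_def f_def g_def max_def split: if_splits)
  ultimately obtain \<omega> where \<omega>: "0 \<le> \<omega>" "\<omega> \<le> 1"
    and weighted: "\<And>z. z \<in> V \<Longrightarrow> 0 \<le> \<omega> * f z + (1 - \<omega>) * g z"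
    using Yuan_lemma \<open>subspace V\<close> by metis
  have "quad_form S x \<le> quad_form (SCI_inv PA PB QA QB \<omega>) x" for x
  proof (rule quad_form_le_SCI_inv[OF spd \<omega>])
    fix u a v b
    assume "PA *v u + QA *v a = PB *v v + QB *v b"
    then have "((u, a), (v, b)) \<in> V"
      by (simp add: V_def)
    from weighted[OF this]
    show "quad_form S (PA *v u + QA *v a)
            \<le> \<omega> * quad_form PA u + (1 - \<omega>) * quad_form PB v + quad_form QA a + quad_form QB b"
      by (simp add: f_def g_def algebra_simps)
  qed
  with \<omega> show ?thesis
    using that by blast
qed

theorem theorem3:
  fixes PA PB QA QB B :: "real^'n^'n"
  assumes "spd PA" and "spd PB" and "spd QA" and "spd QB"
    and "spd B"
    and "tightly_circumscribes B (V_star PA PB QA QB)"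
  shows "\<exists>\<omega>1 \<in> {0..1}. B = B_SCI PA PB QA QB \<omega>1"
proof -
  note spd = assms(1-4)
  have sub: "V_star PA PB QA QB \<subseteq> ellipsoid B"
    and tight: "\<And>Q. spd Q \<Longrightarrow> V_star PA PB QA QB \<subseteq> ellipsoid Q \<Longrightarrow> ellipsoid Q \<subseteq> ellipsoid B \<Longrightarrow> Q = B"
    using assms(6) unfolding tightly_circumscribes_def by blast+
  obtain \<omega> where \<omega>: "0 \<le> \<omega>" "\<omega> \<le> 1"
    and le: "\<And>x. quad_form (matrix_inv B) x \<le> quad_form (SCI_inv PA PB QA QB \<omega>) x"
    using exists_SCI_weight[OF spd spd_imp_sym_mat[OF spd_matrix_inv[OF assms(5)]]]
      V_star_subset_ellipsoid_imp_split_bound[OF spd sub] by blast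
  have "ellipsoid (B_SCI PA PB QA QB \<omega>) \<subseteq> ellipsoid B"
    using le by (simp add: ellipsoid_subset_iff spd_B_SCI[OF spd \<omega>] matrix_inv_B_SCI[OF spd \<omega>])
  then have "B_SCI PA PB QA QB \<omega> = B"
    using tight spd_B_SCI[OF spd \<omega>] V_star_subset_ellipsoid_B_SCI[OF spd \<omega>] by blast
  with \<omega> show ?thesis
    by auto
qed

end
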